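(* Let $\Sigma$ be a finite alphabet with $|\Sigma|\ge 2$, let $m,n$ be positive integers with $m\ge 2$, and let $\rho_1,\rho_2,\rho_3>0$ with $\rho_1+\rho_2+\rho_3\le 1$. The Markov chains with transition matrices $S^{\mathfrak{N}(n)}_{\rho_1,\rho_2,\rho_3}$, $S^{\mathfrak{N}_m(n)}_{\rho_1,\rho_2,\rho_3}$ and $S^{\mathfrak{N}'_m(n)}_{\rho_1,\rho_2,\rho_3}$ are ergodic (irreducible and aperiodic), and their stationary distributions are the uniform distributions on $\mathfrak{N}(n)$, $\mathfrak{N}_m(n)$ and $\mathfrak{N}'_m(n)$ respectively.
   Context: A non-deterministic automaton (NFA) over $\Sigma$ is a tuple $(Q,\Sigma,\Delta,I,F)$ with $Q$ a finite set of states, $\Delta\subseteq Q\times\Sigma\times Q$ the transitions, $I\subseteq Q$ the initial states and $F\subseteq Q$ the final states. The NFA is trim if every state is reachable by a path of transitions from an initial state and from every state some final state is reachable by a path of transitions. $\mathfrak{N}(n)$ is the set of trim NFAs over $\Sigma$ with state set $Q=\{1,\dots,n\}$. $\mathfrak{N}_m(n)$ is the set of automata in $\mathfrak{N}(n)$ such that for each state $p$ there are at most $m$ pairs $(a,q)$ with $(p,a,q)\in\Delta$. $\mathfrak{N}'_m(n)$ is the set of automata in $\mathfrak{N}(n)$ such that for each state $p$ and each letter $a$ there are at most $m$ states $q$ with $(p,a,q)\in\Delta$. For an automaton $\mathcal{A}=(Q,\Sigma,\Delta,I,F)$: $\mathsf{Ch_{init}}(\mathcal{A},q)$ is $\mathcal{A}$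 with $q$ removed from $I$ if $q\in I$ and added to $I$ otherwise; $\mathsf{Ch_{final}}(\mathcal{A},q)$ is defined similarly with $F$; $\mathsf{Ch_{trans}}(\mathcal{A},(p,a,q))$ is $\mathcal{A}$ with $(p,a,q)$ removed from $\Delta$ if present and added otherwise. For a class $\mathfrak{X}$ of automata with state set $Q=\{1,\dots,n\}$, the matrix $S^{\mathfrak{X}}_{\rho_1,\rho_2,\rho_3}$ on $\mathfrak{X}\times\mathfrak{X}$ is: for $x\ne y$, $S(x,y)=\rho_1/n$ if $y=\mathsf{Ch_{init}}(x,q)$ for some $q$; $S(x,y)=\rho_2/n$ if $y=\mathsf{Ch_{final}}(x,q)$ for some $q$; $S(x,y)=\rho_3/(|\Sigma|n^2)$ if $y=\mathsf{Ch_{trans}}(x,(p,a,q))$ for some $(p,a,q)\in Q\times\Sigma\times Q$; $S(x,y)=0$ otherwise; and $S(x,x)=1-\sum_{y\ne x}S(x,y)$. *)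

theory Defs
  imports Complex_Main
begin

record 'a nfa =
  init :: "nat set"
  final :: "nat set"
  trans :: "(nat \<times> 'a \<times> nat) set"

definition edges :: "'a nfa \<Rightarrow> (nat \<times> nat) set" where
  "edges A = {(p, q). \<exists>a. (p, a, q) \<in> trans A}"

definition trim_nfa :: "'a set \<Rightarrow> nat \<Rightarrow> 'a nfa \<Rightarrow> bool" where
  "trim_nfa \<Sigma> n A \<longleftrightarrow>
     init A \<subseteq> {1..n} \<and> final A \<subseteq> {1..n} \<and> trans A \<subseteq> {1..n} \<times> \<Sigma> \<times> {1..n} \<and>
     (\<forall>q\<in>{1..n}. (\<exists>i\<in>init A. (i, q) \<in> (edges A)\<^sup>*) \<and> (\<exists>f\<in>final A. (q, f) \<in> (edges A)\<^sup>*))"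

definition NFAs :: "'a set \<Rightarrow> nat \<Rightarrow> 'a nfa set" where
  "NFAs \<Sigma> n = {A. trim_nfa \<Sigma> n A}"

definition NFAs_m :: "'a set \<Rightarrow> nat \<Rightarrow> nat \<Rightarrow> 'a nfa set" where
  "NFAs_m \<Sigma> m n = {A \<in> NFAs \<Sigma> n.
      \<forall>p\<in>{1..n}. card {(a, q). (p, a, q) \<in> trans A} \<le> m}"

definition NFAs'_m :: "'a set \<Rightarrow> nat \<Rightarrow> nat \<Rightarrow> 'a nfa set" where
  "NFAs'_m \<Sigma> m n = {A \<in> NFAs \<Sigma> n.
      \<forall>p\<in>{1..n}. \<forall>a\<in>\<Sigma>. card {q. (p, a, q) \<in> trans A} \<le> m}"

definition ch_init :: "'a nfa \<Rightarrow> nat \<Rightarrow> 'a nfa" where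
  "ch_init A q = A\<lparr>init := (if q \<in> init A then init A - {q} else insert q (init A))\<rparr>"

definition ch_final :: "'a nfa \<Rightarrow> nat \<Rightarrow> 'a nfa" where
  "ch_final A q = A\<lparr>final := (if q \<in> final A then final A - {q} else insert q (final A))\<rparr>"

definition ch_trans :: "'a nfa \<Rightarrow> nat \<times> 'a \<times> nat \<Rightarrow> 'a nfa" where
  "ch_trans A t = A\<lparr>trans := (if t \<in> trans A then trans A - {t} else insert t (trans A))\<rparr>"

definition S_off :: "'a set \<Rightarrow> nat \<Rightarrow> real \<Rightarrow> real \<Rightarrow> real \<Rightarrow> 'a nfa \<Rightarrow> 'a nfa \<Rightarrow> real" where
  "S_off \<Sigma> n \<rho>1 \<rho>2 \<rho>3 x y =
     (if \<exists>q\<in>{1..n}. y = ch_init x q then \<rho>1 / real n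
      else if \<exists>q\<in>{1..n}. y = ch_final x q then \<rho>2 / real n
      else if \<exists>t\<in>{1..n} \<times> \<Sigma> \<times> {1..n}. y = ch_trans x t
        then \<rho>3 / (real (card \<Sigma>) * real n ^ 2)
      else 0)"

definition S_mat :: "'a set \<Rightarrow> nat \<Rightarrow> real \<Rightarrow> real \<Rightarrow> real \<Rightarrow> 'a nfa set \<Rightarrow> 'a nfa \<Rightarrow> 'a nfa \<Rightarrow> real" where
  "S_mat \<Sigma> n \<rho>1 \<rho>2 \<rho>3 X x y =
     (if x = y then 1 - (\<Sum>z\<in>X - {x}. S_off \<Sigma> n \<rho>1 \<rho>2 \<rho>3 x z)
      else S_off \<Sigma> n \<rho>1 \<rho>2 \<rho>3 x y)"

fun mat_pow :: "'s set \<Rightarrow> ('s \<Rightarrow> 's \<Rightarrow> real) \<Rightarrow> nat \<Rightarrow> 's \<Rightarrow> 's \<Rightarrow> real" where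
  "mat_pow X P 0 x y = (if x = y then 1 else 0)"
| "mat_pow X P (Suc k) x y = (\<Sum>z\<in>X. mat_pow X P k x z * P z y)"

definition irreducible_chain :: "'s set \<Rightarrow> ('s \<Rightarrow> 's \<Rightarrow> real) \<Rightarrow> bool" where
  "irreducible_chain X P \<longleftrightarrow> (\<forall>x\<in>X. \<forall>y\<in>X. \<exists>k. mat_pow X P k x y > 0)"

definition period :: "'s set \<Rightarrow> ('s \<Rightarrow> 's \<Rightarrow> real) \<Rightarrow> 's \<Rightarrow> nat" where
  "period X P x = Gcd {k. k \<ge> 1 \<and> mat_pow X P k x x > 0}"

definition aperiodic_chain :: "'s set \<Rightarrow> ('s \<Rightarrow> 's \<Rightarrow> real) \<Rightarrow> bool" where
  "aperiodic_chain X P \<longleftrightarrow> (\<forall>x\<in>X. period X P x = 1)"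

definition ergodic_chain :: "'s set \<Rightarrow> ('s \<Rightarrow> 's \<Rightarrow> real) \<Rightarrow> bool" where
  "ergodic_chain X P \<longleftrightarrow> irreducible_chain X P \<and> aperiodic_chain X P"

definition stationary_dist :: "'s set \<Rightarrow> ('s \<Rightarrow> 's \<Rightarrow> real) \<Rightarrow> ('s \<Rightarrow> real) \<Rightarrow> bool" where
  "stationary_dist X P \<pi> \<longleftrightarrow> (\<forall>x\<in>X. \<pi> x \<ge> 0) \<and> (\<Sum>x\<in>X. \<pi> x) = 1 \<and>
     (\<forall>y\<in>X. (\<Sum>x\<in>X. \<pi> x * P x y) = \<pi> y)"

definition ergodic_uniform :: "'s set \<Rightarrow> ('s \<Rightarrow> 's \<Rightarrow> real) \<Rightarrow> bool" where
  "ergodic_uniform X P \<longleftrightarrow> ergodic_chain X P \<and>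
     (\<forall>\<pi>. stationary_dist X P \<pi> \<longleftrightarrow> (\<forall>x\<in>X. \<pi> x = 1 / real (card X)))"

end

theory Submission
  imports Defs
begin

text \<open>
  Every flip is an involution, so the matrix \<open>S\<close> is symmetric; its off-diagonal row sums are at
  most \<open>\<rho>1 + \<rho>2 + \<rho>3 \<le> 1\<close>, so it is a symmetric stochastic matrix and the uniform distribution is
  stationary. Any trim automaton reaches the automaton with all states initial and final and no
  transitions: first make every state initial, then final (trimness is preserved), then delete the
  transitions one at a time (every automaton with all states initial and final is trim, and the
  bounds defining \<open>\<NN>_m(n)\<close> and \<open>\<NN>'_m(n)\<close> survive deletions). By symmetry the chain is
  irreducible, so a maximum principle shows that every stationary distribution is uniform.
  That automaton also has a self-loop, because dropping an initial state from it destroys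
  trimness; a loop on a strongly connected chain makes it aperiodic.
\<close>

section \<open>Symmetric stochastic chains\<close>

definition transition_rel :: "'s set \<Rightarrow> ('s \<Rightarrow> 's \<Rightarrow> real) \<Rightarrow> ('s \<times> 's) set" where
  "transition_rel X P = {(x, y). x \<in> X \<and> y \<in> X \<and> P x y > 0}"

lemma mat_pow_nonneg:
  assumes "\<forall>x\<in>X. \<forall>y\<in>X. 0 \<le> P x y" and "y \<in> X"
  shows "0 \<le> mat_pow X P k x y"
  using assms by (induction k arbitrary: y) (auto intro!: sum_nonneg mult_nonneg_nonneg)

lemma mat_pow_pos_of_relpow:
  assumes "finite X" and nonneg: "\<forall>x\<in>X. \<forall>y\<in>X. 0 \<le> P x y"
    and "(x, y) \<in> transition_rel X P ^^ k"
  shows "mat_pow X P k x y > 0"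
  using assms(3)
proof (induction k arbitrary: y)
  case (Suc k)
  then obtain w where xw: "(x, w) \<in> transition_rel X P ^^ k" and wy: "(w, y) \<in> transition_rel X P"
    by auto
  then have "w \<in> X" "y \<in> X" "P w y > 0" by (auto simp: transition_rel_def)
  have "0 < mat_pow X P k x w * P w y" using Suc.IH[OF xw] \<open>P w y > 0\<close> by simp
  also have "\<dots> \<le> (\<Sum>z\<in>X. mat_pow X P k x z * P z y)"
    using \<open>w \<in> X\<close> \<open>y \<in> X\<close> assms(1) nonneg
    by (intro member_le_sum) (auto intro!: mult_nonneg_nonneg mat_pow_nonneg)
  finally show ?case by simp
qed simp

lemma irreducible_chainI:
  assumes "finite X" and "\<forall>x\<in>X. \<forall>y\<in>X. 0 \<le> P x y"
    and "\<And>x y. x \<in> X \<Longrightarrow> y \<in> X \<Longrightarrow> (x, y) \<in> (transition_rel X P)\<^sup>*"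
  shows "irreducible_chain X P"
  unfolding irreducible_chain_def
  using assms mat_pow_pos_of_relpow by (metis rtrancl_power)

lemma Gcd_nat_eq_1_if_consecutive:
  assumes "k \<in> S" and "Suc k \<in> S"
  shows "Gcd S = (1::nat)"
proof -
  have "Gcd S dvd Suc k - k" using assms by (intro dvd_diff_nat Gcd_dvd)
  then show ?thesis by simp
qed

lemma aperiodic_chainI:
  assumes "finite X" and nonneg: "\<forall>x\<in>X. \<forall>y\<in>X. 0 \<le> P x y"
    and "c \<in> X" and "P c c > 0"
    and "\<And>x. x \<in> X \<Longrightarrow> (x, c) \<in> (transition_rel X P)\<^sup>* \<and> (c, x) \<in> (transition_rel X P)\<^sup>*"
  shows "aperiodic_chain X P"
  unfolding aperiodic_chain_def period_def
proof
  fix x assume "x \<in> X"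
  let ?R = "transition_rel X P"
  obtain k l where "(x, c) \<in> ?R ^^ k" "(c, x) \<in> ?R ^^ l"
    using assms(5)[OF \<open>x \<in> X\<close>] by (metis rtrancl_power)
  moreover have "(c, c) \<in> ?R" using assms(3,4) by (simp add: transition_rel_def)
  ultimately have "(x, x) \<in> ?R ^^ (k + 1 + l)" "(x, x) \<in> ?R ^^ (k + 2 + l)"
    unfolding relpow_add numeral_2_eq_2 relpow.simps by auto
  then have "mat_pow X P (k + 1 + l) x x > 0" "mat_pow X P (k + 2 + l) x x > 0"
    using mat_pow_pos_of_relpow[OF assms(1) nonneg] by blast+
  then show "Gcd {k. k \<ge> 1 \<and> mat_pow X P k x x > 0} = 1"
    by (intro Gcd_nat_eq_1_if_consecutive[of "k + 1 + l"]) (auto simp del: mat_pow.simps)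
qed

text \<open>Maximum principle: as the columns sum to one, the maximum of \<open>\<pi>\<close> spreads backwards along
  positive transitions.\<close>

lemma stationary_dist_constant:
  assumes "finite X" and nonneg: "\<forall>x\<in>X. \<forall>y\<in>X. 0 \<le> P x y"
    and col_sums: "\<And>y. y \<in> X \<Longrightarrow> (\<Sum>x\<in>X. P x y) = 1"
    and conn: "\<And>x y. x \<in> X \<Longrightarrow> y \<in> X \<Longrightarrow> (x, y) \<in> (transition_rel X P)\<^sup>*"
    and "stationary_dist X P \<pi>" and "x \<in> X" and "y \<in> X"
  shows "\<pi> x = \<pi> y"
proof -
  have balance: "\<And>y. y \<in> X \<Longrightarrow> (\<Sum>x\<in>X. \<pi> x * P x y) = \<pi> y"
    using assms(5) by (simp add: stationary_dist_def)
  define M where "M = Max (\<pi> ` X)"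
  have le_M: "\<pi> x \<le> M" if "x \<in> X" for x
    using assms(1) that by (simp add: M_def)
  have M_backward: "\<pi> x = M" if "(x, y) \<in> transition_rel X P" and "\<pi> y = M" for x y
  proof -
    from that have "x \<in> X" "y \<in> X" "P x y > 0" by (auto simp: transition_rel_def)
    have "(\<Sum>z\<in>X. (M - \<pi> z) * P z y) = M * (\<Sum>z\<in>X. P z y) - (\<Sum>z\<in>X. \<pi> z * P z y)"
      by (simp add: algebra_simps sum_subtractf sum_distrib_left)
    also have "\<dots> = 0" using col_sums balance \<open>y \<in> X\<close> \<open>\<pi> y = M\<close> by simp
    finally have "(M - \<pi> x) * P x y = 0"
      using \<open>x \<in> X\<close> \<open>y \<in> X\<close> le_M nonneg assms(1)
      by (subst (asm) sum_nonneg_eq_0_iff) auto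
    with \<open>P x y > 0\<close> show ?thesis by simp
  qed
  have M_everywhere: "\<pi> z = M" if "z \<in> X" for z
  proof -
    have "M \<in> \<pi> ` X" unfolding M_def using assms(1,6) by (intro Max_in) auto
    then obtain z0 where "z0 \<in> X" "\<pi> z0 = M" by blast
    have "(z, z0) \<in> (transition_rel X P)\<^sup>*" using conn that \<open>z0 \<in> X\<close> by simp
    then show ?thesis
      by (induction rule: converse_rtrancl_induct) (use \<open>\<pi> z0 = M\<close> M_backward in blast)+
  qed
  show ?thesis using M_everywhere assms(6,7) by simp
qed

lemma stationary_dist_iff_uniform:
  assumes "finite X" and "X \<noteq> {}" and "\<forall>x\<in>X. \<forall>y\<in>X. 0 \<le> P x y"
    and col_sums: "\<And>y. y \<in> X \<Longrightarrow> (\<Sum>x\<in>X. P x y) = 1"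
    and "\<And>x y. x \<in> X \<Longrightarrow> y \<in> X \<Longrightarrow> (x, y) \<in> (transition_rel X P)\<^sup>*"
  shows "stationary_dist X P \<pi> \<longleftrightarrow> (\<forall>x\<in>X. \<pi> x = 1 / real (card X))"
proof
  assume stat: "stationary_dist X P \<pi>"
  obtain x0 where "x0 \<in> X" using assms(2) by blast
  have "\<pi> x = \<pi> x0" if "x \<in> X" for x
    using stationary_dist_constant[OF assms(1,3,4,5) stat that \<open>x0 \<in> X\<close>] .
  moreover have "(\<Sum>x\<in>X. \<pi> x) = 1" using stat by (simp add: stationary_dist_def)
  ultimately have "real (card X) * \<pi> x0 = 1" by simp
  moreover have "card X > 0" using assms(1,2) by (simp add: card_gt_0_iff)
  ultimately show "\<forall>x\<in>X. \<pi> x = 1 / real (card X)"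
    using \<open>\<And>x. x \<in> X \<Longrightarrow> \<pi> x = \<pi> x0\<close> by (simp add: field_simps)
next
  assume uniform: "\<forall>x\<in>X. \<pi> x = 1 / real (card X)"
  have "card X > 0" using assms(1,2) by (simp add: card_gt_0_iff)
  moreover have "(\<Sum>x\<in>X. \<pi> x * P x y) = \<pi> y" if "y \<in> X" for y
    using uniform that col_sums[OF that] by (simp add: sum_divide_distrib[symmetric])
  ultimately show "stationary_dist X P \<pi>"
    using uniform by (simp add: stationary_dist_def)
qed

lemma ergodic_uniformI:
  assumes "finite X" and nonneg: "\<forall>x\<in>X. \<forall>y\<in>X. 0 \<le> P x y"
    and sym: "\<And>x y. x \<in> X \<Longrightarrow> y \<in> X \<Longrightarrow> P x y = P y x"
    and row_sums: "\<And>x. x \<in> X \<Longrightarrow> (\<Sum>y\<in>X. P x y) = 1"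
    and "c \<in> X" and "P c c > 0"
    and to_c: "\<And>x. x \<in> X \<Longrightarrow> (x, c) \<in> (transition_rel X P)\<^sup>*"
  shows "ergodic_uniform X P"
proof -
  let ?R = "transition_rel X P"
  have "?R\<inverse> = ?R" using sym by (auto simp: transition_rel_def)
  then have from_c: "(c, x) \<in> ?R\<^sup>*" if "x \<in> X" for x
    using to_c[OF that] by (metis rtrancl_converseI)
  have conn: "(x, y) \<in> ?R\<^sup>*" if "x \<in> X" "y \<in> X" for x y
    using to_c from_c that by (meson rtrancl_trans)
  have col_sums: "(\<Sum>x\<in>X. P x y) = 1" if "y \<in> X" for y
  proof -
    have "(\<Sum>x\<in>X. P x y) = (\<Sum>x\<in>X. P y x)" using sym that by (intro sum.cong) auto
    then show ?thesis using row_sums[OF that] by simp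
  qed
  have "irreducible_chain X P" by (rule irreducible_chainI[OF assms(1) nonneg conn])
  moreover have "aperiodic_chain X P"
    by (rule aperiodic_chainI[OF assms(1) nonneg \<open>c \<in> X\<close> \<open>P c c > 0\<close>]) (simp add: to_c from_c)
  moreover have "stationary_dist X P \<pi> \<longleftrightarrow> (\<forall>x\<in>X. \<pi> x = 1 / real (card X))" for \<pi>
    using \<open>c \<in> X\<close> by (intro stationary_dist_iff_uniform[OF assms(1) _ nonneg col_sums conn]) auto
  ultimately show ?thesis unfolding ergodic_uniform_def ergodic_chain_def by blast
qed

section \<open>Flips of automata\<close>

lemma ch_init_ch_init [simp]: "ch_init (ch_init A q) q = A"
  by (auto simp: ch_init_def insert_absorb)

lemma ch_final_ch_final [simp]: "ch_final (ch_final A q) q = A"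
  by (auto simp: ch_final_def insert_absorb)

lemma ch_trans_ch_trans [simp]: "ch_trans (ch_trans A t) t = A"
  by (auto simp: ch_trans_def insert_absorb)

lemma ch_init_neq: "ch_init A q \<noteq> A"
proof
  assume "ch_init A q = A"
  then have "init (ch_init A q) = init A" by simp
  then show False by (auto simp: ch_init_def split: if_splits)
qed

lemma ch_final_neq: "ch_final A q \<noteq> A"
proof
  assume "ch_final A q = A"
  then have "final (ch_final A q) = final A" by simp
  then show False by (auto simp: ch_final_def split: if_splits)
qed

lemma ch_trans_neq: "ch_trans A t \<noteq> A"
proof
  assume "ch_trans A t = A"
  then have "trans (ch_trans A t) = trans A" by simp
  then show False by (auto simp: ch_trans_def split: if_splits)
qed

lemma S_off_commute: "S_off \<Sigma> n \<rho>1 \<rho>2 \<rho>3 A B = S_off \<Sigma> n \<rho>1 \<rho>2 \<rho>3 B A"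
proof -
  have "(\<exists>q\<in>Q. B = ch_init A q) \<longleftrightarrow> (\<exists>q\<in>Q. A = ch_init B q)"
    "(\<exists>q\<in>Q. B = ch_final A q) \<longleftrightarrow> (\<exists>q\<in>Q. A = ch_final B q)"
    "(\<exists>t\<in>T. B = ch_trans A t) \<longleftrightarrow> (\<exists>t\<in>T. A = ch_trans B t)" for Q T
    by (metis ch_init_ch_init, metis ch_final_ch_final, metis ch_trans_ch_trans)
  then show ?thesis unfolding S_off_def by (simp only:)
qed

lemma S_off_nonneg: "\<rho>1 \<ge> 0 \<Longrightarrow> \<rho>2 \<ge> 0 \<Longrightarrow> \<rho>3 \<ge> 0 \<Longrightarrow> S_off \<Sigma> n \<rho>1 \<rho>2 \<rho>3 A B \<ge> 0"
  unfolding S_off_def by auto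

definition flips :: "'a set \<Rightarrow> nat \<Rightarrow> 'a nfa \<Rightarrow> 'a nfa set" where
  "flips \<Sigma> n A = ch_init A ` {1..n} \<union> ch_final A ` {1..n} \<union> ch_trans A ` ({1..n} \<times> \<Sigma> \<times> {1..n})"

lemma not_in_flips: "A \<notin> flips \<Sigma> n A"
  by (auto simp: flips_def ch_init_neq ch_final_neq ch_trans_neq dest: sym)

lemma S_off_pos:
  assumes "\<rho>1 > 0" "\<rho>2 > 0" "\<rho>3 > 0" "n \<ge> 1" "card \<Sigma> > 0" and "B \<in> flips \<Sigma> n A"
  shows "S_off \<Sigma> n \<rho>1 \<rho>2 \<rho>3 A B > 0"
  using assms unfolding flips_def S_off_def
  by (auto simp del: ch_init_ch_init ch_final_ch_final ch_trans_ch_trans)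

lemma card_Int_image_le: "finite B \<Longrightarrow> card (A \<inter> f ` B) \<le> card B"
  by (meson card_image_le card_mono finite_imageI inf_le2 le_trans)

lemma sum_S_off_le:
  assumes "finite \<Sigma>" "n \<ge> 1" "\<rho>1 \<ge> 0" "\<rho>2 \<ge> 0" "\<rho>3 \<ge> 0" "finite Y"
  shows "(\<Sum>B\<in>Y. S_off \<Sigma> n \<rho>1 \<rho>2 \<rho>3 A B)
    \<le> \<rho>1 / n * card (Y \<inter> ch_init A ` {1..n}) + \<rho>2 + \<rho>3"
proof -
  let ?Ni = "ch_init A ` {1..n}" and ?Nf = "ch_final A ` {1..n}"
    and ?Nt = "ch_trans A ` ({1..n} \<times> \<Sigma> \<times> {1..n})"
  define c where "c = \<rho>3 / (real (card \<Sigma>) * real n ^ 2)"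
  have "c \<ge> 0" using assms by (simp add: c_def)
  have ite_le: "(if P1 then a else if P2 then b else if P3 then d else 0)
      \<le> a * of_bool P1 + b * of_bool P2 + d * of_bool P3"
    if "0 \<le> a" "0 \<le> b" "0 \<le> d" for a b d :: real and P1 P2 P3
    using that by simp
  have "S_off \<Sigma> n \<rho>1 \<rho>2 \<rho>3 A B
      = (if B \<in> ?Ni then \<rho>1 / n else if B \<in> ?Nf then \<rho>2 / n else if B \<in> ?Nt then c else 0)" for B
    by (simp only: S_off_def c_def image_iff)
  also have "\<dots> B \<le> \<rho>1 / n * of_bool (B \<in> ?Ni) + \<rho>2 / n * of_bool (B \<in> ?Nf) + c * of_bool (B \<in> ?Nt)"
    for B using assms \<open>c \<ge> 0\<close> by (intro ite_le) auto
  finally have pointwise: "S_off \<Sigma> n \<rho>1 \<rho>2 \<rho>3 A B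
      \<le> \<rho>1 / n * of_bool (B \<in> ?Ni) + \<rho>2 / n * of_bool (B \<in> ?Nf) + c * of_bool (B \<in> ?Nt)" for B .
  have "(\<Sum>B\<in>Y. S_off \<Sigma> n \<rho>1 \<rho>2 \<rho>3 A B)
      \<le> (\<Sum>B\<in>Y. \<rho>1 / n * of_bool (B \<in> ?Ni) + \<rho>2 / n * of_bool (B \<in> ?Nf) + c * of_bool (B \<in> ?Nt))"
    by (rule sum_mono) (rule pointwise)
  also have "\<dots> = \<rho>1 / n * card (Y \<inter> ?Ni) + \<rho>2 / n * card (Y \<inter> ?Nf) + c * card (Y \<inter> ?Nt)"
    using assms(6) by (simp only: sum.distrib sum_distrib_left[symmetric]) simp
  finally have "(\<Sum>B\<in>Y. S_off \<Sigma> n \<rho>1 \<rho>2 \<rho>3 A B)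
      \<le> \<rho>1 / n * card (Y \<inter> ?Ni) + \<rho>2 / n * card (Y \<inter> ?Nf) + c * card (Y \<inter> ?Nt)" .
  moreover have "\<rho>2 / n * card (Y \<inter> ?Nf) \<le> \<rho>2"
  proof -
    have "\<rho>2 / n * card (Y \<inter> ?Nf) \<le> \<rho>2 / n * n"
      using card_Int_image_le[of "{1..n}" Y] assms by (intro mult_left_mono) auto
    then show ?thesis using assms by simp
  qed
  moreover have "c * card (Y \<inter> ?Nt) \<le> \<rho>3"
  proof -
    have "card (Y \<inter> ?Nt) \<le> card ({1..n} \<times> \<Sigma> \<times> {1..n})"
      using assms(1) by (intro card_Int_image_le) simp
    also have "\<dots> = card \<Sigma> * n ^ 2" by (simp add: card_cartesian_product power2_eq_square)
    finally have "c * card (Y \<inter> ?Nt) \<le> c * (card \<Sigma> * n ^ 2)"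
      using \<open>c \<ge> 0\<close> by (intro mult_left_mono of_nat_mono)
    also have "\<dots> \<le> \<rho>3" using assms by (simp add: c_def)
    finally show ?thesis .
  qed
  ultimately show ?thesis by linarith
qed

lemma trim_nfa_if_all_init_final:
  assumes "init A = {1..n}" "final A = {1..n}" "trans A \<subseteq> {1..n} \<times> \<Sigma> \<times> {1..n}"
  shows "trim_nfa \<Sigma> n A"
  using assms unfolding trim_nfa_def by auto

lemma trim_nfa_mono:
  assumes "trim_nfa \<Sigma> n A" "init A \<subseteq> init B" "init B \<subseteq> {1..n}"
    "final A \<subseteq> final B" "final B \<subseteq> {1..n}" "trans B = trans A"
  shows "trim_nfa \<Sigma> n B"
proof -
  have "edges B = edges A" using assms(6) by (simp add: edges_def)
  then show ?thesis using assms unfolding trim_nfa_def by (simp only:) blast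
qed

lemma finite_NFAs:
  assumes "finite \<Sigma>"
  shows "finite (NFAs \<Sigma> n)"
proof -
  let ?mk = "\<lambda>(I, F, T). \<lparr>init = I, final = F, trans = T\<rparr> :: 'a nfa"
  have "NFAs \<Sigma> n \<subseteq> ?mk ` (Pow {1..n} \<times> Pow {1..n} \<times> Pow ({1..n} \<times> \<Sigma> \<times> {1..n}))"
  proof
    fix A assume "A \<in> NFAs \<Sigma> n"
    then show "A \<in> ?mk ` (Pow {1..n} \<times> Pow {1..n} \<times> Pow ({1..n} \<times> \<Sigma> \<times> {1..n}))"
      by (intro image_eqI[where x = "(init A, final A, trans A)"]) (auto simp: NFAs_def trim_nfa_def)
  qed
  then show ?thesis by (rule finite_subset) (use assms in auto)
qed

lemma rtrancl_by_insertions: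
  assumes "finite I"
    and "\<And>J q. J \<subseteq> I \<Longrightarrow> q \<in> I \<Longrightarrow> q \<notin> J \<Longrightarrow> (g J, g (insert q J)) \<in> R\<^sup>*"
  shows "(g {}, g I) \<in> R\<^sup>*"
  using assms
proof (induction I rule: finite_induct)
  case (insert q I)
  have "(g {}, g I) \<in> R\<^sup>*"
    by (rule insert.IH) (use insert.prems in blast)
  moreover have "(g I, g (insert q I)) \<in> R\<^sup>*"
    by (rule insert.prems) (use insert.hyps in auto)
  ultimately show ?case by (rule rtrancl_trans)
qed simp

section \<open>The flip chain on trim automata with a hereditary transition constraint\<close>

definition NFAs_with :: "'a set \<Rightarrow> nat \<Rightarrow> ((nat \<times> 'a \<times> nat) set \<Rightarrow> bool) \<Rightarrow> 'a nfa set" where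
  "NFAs_with \<Sigma> n Q = {A \<in> NFAs \<Sigma> n. Q (trans A)}"

definition no_trans_nfa :: "nat \<Rightarrow> 'a nfa" where
  "no_trans_nfa n = \<lparr>init = {1..n}, final = {1..n}, trans = {}\<rparr>"

locale nfa_flip_chain =
  fixes \<Sigma> :: "'a set" and n :: nat and Q :: "(nat \<times> 'a \<times> nat) set \<Rightarrow> bool"
    and \<rho>1 \<rho>2 \<rho>3 :: real
  assumes finite_alphabet: "finite \<Sigma>" and alphabet_nonempty: "card \<Sigma> > 0" and n_pos: "n \<ge> 1"
    and \<rho>_pos: "\<rho>1 > 0" "\<rho>2 > 0" "\<rho>3 > 0" and \<rho>_sum: "\<rho>1 + \<rho>2 + \<rho>3 \<le> 1"
    and Q_empty: "Q {}"
    and Q_antimono: "\<And>T T'. finite T \<Longrightarrow> T' \<subseteq> T \<Longrightarrow> Q T \<Longrightarrow> Q T'"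
begin

abbreviation states :: "'a nfa set" where
  "states \<equiv> NFAs_with \<Sigma> n Q"

abbreviation S :: "'a nfa \<Rightarrow> 'a nfa \<Rightarrow> real" where
  "S \<equiv> S_mat \<Sigma> n \<rho>1 \<rho>2 \<rho>3 states"

lemma states_iff: "A \<in> states \<longleftrightarrow> trim_nfa \<Sigma> n A \<and> Q (trans A)"
  by (simp add: NFAs_with_def NFAs_def)

lemma finite_states: "finite states"
  using finite_NFAs[OF finite_alphabet] by (rule finite_subset[rotated]) (auto simp: NFAs_with_def)

lemma no_trans_nfa_in_states: "no_trans_nfa n \<in> states"
  by (simp add: states_iff no_trans_nfa_def Q_empty trim_nfa_if_all_init_final)

lemma sum_S_off_states_le:
  "(\<Sum>B\<in>states - {A}. S_off \<Sigma> n \<rho>1 \<rho>2 \<rho>3 A B)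
    \<le> \<rho>1 / n * card ((states - {A}) \<inter> ch_init A ` {1..n}) + \<rho>2 + \<rho>3"
  using finite_states \<rho>_pos
  by (intro sum_S_off_le finite_alphabet n_pos) auto

lemma S_diag_ge: "S A A \<ge> 1 - (\<rho>1 + \<rho>2 + \<rho>3)"
proof -
  have "\<rho>1 / n * card ((states - {A}) \<inter> ch_init A ` {1..n}) \<le> \<rho>1 / n * n"
    using card_Int_image_le[of "{1..n}" "states - {A}" "ch_init A"] \<rho>_pos
    by (intro mult_left_mono) auto
  then show ?thesis using sum_S_off_states_le[of A] n_pos by (simp add: S_mat_def)
qed

text \<open>No initial state can be dropped from \<open>no_trans_nfa n\<close>: without edges the state would become
  unreachable.\<close>

lemma S_no_trans_nfa_pos: "S (no_trans_nfa n) (no_trans_nfa n) > 0"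
proof -
  let ?C = "no_trans_nfa n :: 'a nfa"
  have "ch_init ?C q \<notin> states" if "q \<in> {1..n}" for q
  proof
    assume "ch_init ?C q \<in> states"
    moreover have "edges (ch_init ?C q) = {}" by (simp add: edges_def ch_init_def no_trans_nfa_def)
    ultimately show False
      using that unfolding states_iff trim_nfa_def by (auto simp: ch_init_def no_trans_nfa_def)
  qed
  then have "(states - {?C}) \<inter> ch_init ?C ` {1..n} = {}" by auto
  then show ?thesis using sum_S_off_states_le[of ?C] \<rho>_pos \<rho>_sum by (simp add: S_mat_def)
qed

lemma S_nonneg: "\<forall>A\<in>states. \<forall>B\<in>states. 0 \<le> S A B"
proof (intro ballI)
  fix A B
  show "0 \<le> S A B"
  proof (cases "A = B")
    case True
    then show ?thesis using S_diag_ge[of B] \<rho>_sum by simp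
  next
    case False
    then show ?thesis using \<rho>_pos by (simp add: S_mat_def S_off_nonneg)
  qed
qed

lemma S_commute: "S A B = S B A"
  by (simp add: S_mat_def S_off_commute)

lemma S_row_sum:
  assumes "A \<in> states"
  shows "(\<Sum>B\<in>states. S A B) = 1"
proof -
  have "(\<Sum>B\<in>states. S A B) = S A A + (\<Sum>B\<in>states - {A}. S A B)"
    by (rule sum.remove[OF finite_states assms])
  also have "(\<Sum>B\<in>states - {A}. S A B) = (\<Sum>B\<in>states - {A}. S_off \<Sigma> n \<rho>1 \<rho>2 \<rho>3 A B)"
    by (rule sum.cong) (auto simp: S_mat_def)
  finally show ?thesis by (simp add: S_mat_def)
qed

lemma flip_in_transition_rel:
  assumes "A \<in> states" "B \<in> states" "B \<in> flips \<Sigma> n A"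
  shows "(A, B) \<in> transition_rel states S"
proof -
  have "B \<noteq> A" using assms(3) not_in_flips by blast
  then show ?thesis
    using assms S_off_pos[OF \<rho>_pos n_pos alphabet_nonempty assms(3)]
    by (simp add: transition_rel_def S_mat_def)
qed

lemma add_init_in_states:
  assumes "A \<in> states" "I \<subseteq> {1..n}"
  shows "A\<lparr>init := init A \<union> I\<rparr> \<in> states"
proof -
  have "trim_nfa \<Sigma> n A" "Q (trans A)" using assms(1) by (simp_all add: states_iff)
  moreover have "trim_nfa \<Sigma> n (A\<lparr>init := init A \<union> I\<rparr>)"
    by (rule trim_nfa_mono[OF \<open>trim_nfa \<Sigma> n A\<close>])
      (use assms(2) \<open>trim_nfa \<Sigma> n A\<close> in \<open>auto simp: trim_nfa_def\<close>)
  ultimately show ?thesis by (simp add: states_iff)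
qed

lemma add_final_in_states:
  assumes "A \<in> states" "I \<subseteq> {1..n}"
  shows "A\<lparr>final := final A \<union> I\<rparr> \<in> states"
proof -
  have "trim_nfa \<Sigma> n A" "Q (trans A)" using assms(1) by (simp_all add: states_iff)
  moreover have "trim_nfa \<Sigma> n (A\<lparr>final := final A \<union> I\<rparr>)"
    by (rule trim_nfa_mono[OF \<open>trim_nfa \<Sigma> n A\<close>])
      (use assms(2) \<open>trim_nfa \<Sigma> n A\<close> in \<open>auto simp: trim_nfa_def\<close>)
  ultimately show ?thesis by (simp add: states_iff)
qed

lemma rtrancl_by_flips:
  assumes "finite I" and "\<And>J. J \<subseteq> I \<Longrightarrow> g J \<in> states"
    and "\<And>J q. J \<subseteq> I \<Longrightarrow> q \<in> I \<Longrightarrow> q \<notin> J \<Longrightarrow>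
      g (insert q J) = g J \<or> g (insert q J) \<in> flips \<Sigma> n (g J)"
  shows "(g {}, g I) \<in> (transition_rel states S)\<^sup>*"
proof (rule rtrancl_by_insertions[OF assms(1)])
  fix J q assume "J \<subseteq> I" "q \<in> I" "q \<notin> J"
  then consider "g (insert q J) = g J" | "g (insert q J) \<in> flips \<Sigma> n (g J)"
    using assms(3) by blast
  then show "(g J, g (insert q J)) \<in> (transition_rel states S)\<^sup>*"
  proof cases
    case 2
    have "g J \<in> states" "g (insert q J) \<in> states" using \<open>J \<subseteq> I\<close> \<open>q \<in> I\<close> assms(2) by auto
    with 2 show ?thesis by (blast intro: flip_in_transition_rel)
  qed simp
qed

lemma reaches_all_init:
  assumes "A \<in> states"
  shows "(A, A\<lparr>init := {1..n}\<rparr>) \<in> (transition_rel states S)\<^sup>*"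
proof -
  let ?g = "\<lambda>J. A\<lparr>init := init A \<union> J\<rparr>"
  have "?g (insert q J) = ?g J \<or> ?g (insert q J) \<in> flips \<Sigma> n (?g J)"
    if "q \<in> {1..n}" "q \<notin> J" for J q
  proof (cases "q \<in> init A")
    case True
    then show ?thesis by (simp add: insert_absorb)
  next
    case False
    with \<open>q \<notin> J\<close> have "?g (insert q J) = ch_init (?g J) q" by (simp add: ch_init_def)
    with \<open>q \<in> {1..n}\<close> show ?thesis unfolding flips_def by blast
  qed
  then have "(?g {}, ?g {1..n}) \<in> (transition_rel states S)\<^sup>*"
    using assms by (intro rtrancl_by_flips add_init_in_states) auto
  moreover have "init A \<subseteq> {1..n}" using assms by (simp add: states_iff trim_nfa_def)
  ultimately show ?thesis by (simp add: Un_absorb1)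
qed

lemma reaches_all_final:
  assumes "A \<in> states"
  shows "(A, A\<lparr>final := {1..n}\<rparr>) \<in> (transition_rel states S)\<^sup>*"
proof -
  let ?g = "\<lambda>J. A\<lparr>final := final A \<union> J\<rparr>"
  have "?g (insert q J) = ?g J \<or> ?g (insert q J) \<in> flips \<Sigma> n (?g J)"
    if "q \<in> {1..n}" "q \<notin> J" for J q
  proof (cases "q \<in> final A")
    case True
    then show ?thesis by (simp add: insert_absorb)
  next
    case False
    with \<open>q \<notin> J\<close> have "?g (insert q J) = ch_final (?g J) q" by (simp add: ch_final_def)
    with \<open>q \<in> {1..n}\<close> show ?thesis unfolding flips_def by blast
  qed
  then have "(?g {}, ?g {1..n}) \<in> (transition_rel states S)\<^sup>*"
    using assms by (intro rtrancl_by_flips add_final_in_states) auto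
  moreover have "final A \<subseteq> {1..n}" using assms by (simp add: states_iff trim_nfa_def)
  ultimately show ?thesis by (simp add: Un_absorb1)
qed

lemma reaches_no_trans:
  assumes "A \<in> states" and "init A = {1..n}" and "final A = {1..n}"
  shows "(A, A\<lparr>trans := {}\<rparr>) \<in> (transition_rel states S)\<^sup>*"
proof -
  let ?g = "\<lambda>T. A\<lparr>trans := trans A - T\<rparr>"
  have box: "trans A \<subseteq> {1..n} \<times> \<Sigma> \<times> {1..n}" and "Q (trans A)"
    using assms(1) by (simp_all add: states_iff trim_nfa_def)
  then have "finite (trans A)" using finite_alphabet by (intro finite_subset[OF box]) simp
  have in_states: "?g T \<in> states" for T
  proof -
    have "trim_nfa \<Sigma> n (?g T)" using box assms(2,3) by (intro trim_nfa_if_all_init_final) auto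
    moreover have "Q (trans (?g T))" using Q_antimono[OF \<open>finite (trans A)\<close> _ \<open>Q (trans A)\<close>] by simp
    ultimately show ?thesis by (simp add: states_iff)
  qed
  have flip: "?g (insert t T) \<in> flips \<Sigma> n (?g T)" if "t \<in> trans A" "t \<notin> T" for T t
  proof -
    have "t \<in> {1..n} \<times> \<Sigma> \<times> {1..n}" using that box by blast
    then have "ch_trans (?g T) t \<in> flips \<Sigma> n (?g T)" unfolding flips_def by (intro UnI2 imageI)
    moreover have "?g (insert t T) = ch_trans (?g T) t"
      using that by (simp add: ch_trans_def Diff_insert[of "trans A" t T])
    ultimately show ?thesis by (simp only:)
  qed
  have "(?g {}, ?g (trans A)) \<in> (transition_rel states S)\<^sup>*"
    by (rule rtrancl_by_flips[OF \<open>finite (trans A)\<close> in_states]) (simp add: flip)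
  then show ?thesis by simp
qed

lemma reaches_no_trans_nfa:
  assumes "A \<in> states"
  shows "(A, no_trans_nfa n) \<in> (transition_rel states S)\<^sup>*"
proof -
  define A1 where "A1 = A\<lparr>init := {1..n}\<rparr>"
  define A2 where "A2 = A1\<lparr>final := {1..n}\<rparr>"
  have "(A, A1) \<in> (transition_rel states S)\<^sup>*"
    unfolding A1_def using assms by (rule reaches_all_init)
  moreover have "init A \<subseteq> {1..n}" "final A \<subseteq> {1..n}"
    using assms by (simp_all add: states_iff trim_nfa_def)
  then have "A1 \<in> states"
    unfolding A1_def using add_init_in_states[OF assms, of "{1..n}"] by (simp add: Un_absorb1)
  then have "(A1, A2) \<in> (transition_rel states S)\<^sup>*"
    unfolding A2_def by (rule reaches_all_final)
  moreover have "A2 \<in> states"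
    unfolding A2_def using add_final_in_states[OF \<open>A1 \<in> states\<close>, of "{1..n}"]
      \<open>final A \<subseteq> {1..n}\<close> by (simp add: A1_def Un_absorb1)
  then have "(A2, A2\<lparr>trans := {}\<rparr>) \<in> (transition_rel states S)\<^sup>*"
    by (rule reaches_no_trans) (simp_all add: A1_def A2_def)
  moreover have "A2\<lparr>trans := {}\<rparr> = no_trans_nfa n" by (simp add: A1_def A2_def no_trans_nfa_def)
  ultimately show ?thesis by (auto intro: rtrancl_trans)
qed

theorem ergodic_uniform_states: "ergodic_uniform states S"
  by (rule ergodic_uniformI[OF finite_states S_nonneg S_commute S_row_sum
        no_trans_nfa_in_states S_no_trans_nfa_pos reaches_no_trans_nfa])

end

lemma card_out_transitions_mono:
  assumes "finite T" "T' \<subseteq> T"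
  shows "card {(a, q). (p, a, q) \<in> T'} \<le> card {(a, q). (p, a, q) \<in> T}"
proof (rule card_mono)
  show "finite {(a, q). (p, a, q) \<in> T}"
    using assms(1) by (rule finite_subset[rotated, OF finite_imageI[of _ snd]]) force
qed (use assms(2) in auto)

lemma card_successors_mono:
  assumes "finite T" "T' \<subseteq> T"
  shows "card {q. (p, a, q) \<in> T'} \<le> card {q. (p, a, q) \<in> T}"
proof (rule card_mono)
  show "finite {q. (p, a, q) \<in> T}"
    using assms(1) by (rule finite_subset[rotated, OF finite_imageI[of _ "snd \<circ> snd"]]) force
qed (use assms(2) in auto)

theorem proposition1:
  fixes \<Sigma> :: "'a set" and m n :: nat and \<rho>1 \<rho>2 \<rho>3 :: real
  assumes "finite \<Sigma>" and "card \<Sigma> \<ge> 2"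
    and "n \<ge> 1" and "m \<ge> 2"
    and "\<rho>1 > 0" and "\<rho>2 > 0" and "\<rho>3 > 0" and "\<rho>1 + \<rho>2 + \<rho>3 \<le> 1"
  shows "ergodic_uniform (NFAs \<Sigma> n) (S_mat \<Sigma> n \<rho>1 \<rho>2 \<rho>3 (NFAs \<Sigma> n))
       \<and> ergodic_uniform (NFAs_m \<Sigma> m n) (S_mat \<Sigma> n \<rho>1 \<rho>2 \<rho>3 (NFAs_m \<Sigma> m n))
       \<and> ergodic_uniform (NFAs'_m \<Sigma> m n) (S_mat \<Sigma> n \<rho>1 \<rho>2 \<rho>3 (NFAs'_m \<Sigma> m n))"
proof -
  have ergodic: "ergodic_uniform (NFAs_with \<Sigma> n Q) (S_mat \<Sigma> n \<rho>1 \<rho>2 \<rho>3 (NFAs_with \<Sigma> n Q))"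
    if "Q {}" and "\<And>T T'. finite T \<Longrightarrow> T' \<subseteq> T \<Longrightarrow> Q T \<Longrightarrow> Q T'" for Q
  proof -
    have "nfa_flip_chain \<Sigma> n Q \<rho>1 \<rho>2 \<rho>3"
      by (unfold_locales; (rule that)?) (use assms in auto)
    then show ?thesis by (rule nfa_flip_chain.ergodic_uniform_states)
  qed
  have NFAs_eqs: "NFAs \<Sigma> n = NFAs_with \<Sigma> n (\<lambda>_. True)"
    "NFAs_m \<Sigma> m n = NFAs_with \<Sigma> n (\<lambda>T. \<forall>p\<in>{1..n}. card {(a, q). (p, a, q) \<in> T} \<le> m)"
    "NFAs'_m \<Sigma> m n = NFAs_with \<Sigma> n (\<lambda>T. \<forall>p\<in>{1..n}. \<forall>a\<in>\<Sigma>. card {q. (p, a, q) \<in> T} \<le> m)"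
    by (auto simp: NFAs_with_def NFAs_m_def NFAs'_m_def)
  have out_mono: "\<forall>p\<in>{1..n}. card {(a, q). (p, a, q) \<in> T'} \<le> m"
    if "finite T" "T' \<subseteq> T" "\<forall>p\<in>{1..n}. card {(a, q). (p, a, q) \<in> T} \<le> m" for T T'
    using that card_out_transitions_mono[OF that(1,2)] le_trans by blast
  have succ_mono: "\<forall>p\<in>{1..n}. \<forall>a\<in>\<Sigma>. card {q. (p, a, q) \<in> T'} \<le> m"
    if "finite T" "T' \<subseteq> T" "\<forall>p\<in>{1..n}. \<forall>a\<in>\<Sigma>. card {q. (p, a, q) \<in> T} \<le> m" for T T'
    using that card_successors_mono[OF that(1,2)] le_trans by blast
  show ?thesis
    unfolding NFAs_eqs by (intro conjI; rule ergodic) (simp_all add: out_mono succ_mono)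
qed

end
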